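(* Let $\mathsf{H}^\ast$ be a clique coverage of $\mathrm{G}$ with $|\mathsf{H}^\ast|=d$, let $(\mathrm{Q}_1,\dots,\mathrm{Q}_d)$ be an ordering of $\mathsf{H}^\ast$ in which every clique appears exactly once, and let $\mathbf{M}_{\mathrm{C}}$, $\mathrm{C}\in\mathsf{H}^\ast$, be clique-gossip matrices with arbitrary blocks. If the generalized line graph $\mathcal{L}(\mathsf{H}^\ast)$ contains no cycle, then for every permutation $\pi$ of $\{1,\dots,d\}$ the matrices $\mathbf{F}=\mathbf{M}_{\mathrm{Q}_d}\cdots\mathbf{M}_{\mathrm{Q}_1}$ and $\mathbf{F}_\pi=\mathbf{M}_{\mathrm{Q}_{\pi(d)}}\cdots\mathbf{M}_{\mathrm{Q}_{\pi(1)}}$ have the same characteristic polynomial.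
   Context: $\mathrm{G}=(\mathrm{V},\mathrm{E})$ is a simple undirected graph with $\mathrm{V}=\{1,\dots,n\}$; $\mathrm{G}[\mathrm{S}]$ is the induced subgraph on $\mathrm{S}\subset\mathrm{V}$. A clique is a subset $\mathrm{C}\subset\mathrm{V}$ with $\mathrm{G}[\mathrm{C}]$ complete. A clique coverage of $\mathrm{G}$ is a finite set $\mathsf{H}^\ast$ of cliques whose union is $\mathrm{V}$ and whose union graph $\bigcup_{\mathrm{C}\in\mathsf{H}^\ast}\mathrm{G}[\mathrm{C}]$ is connected. The generalized line graph $\mathcal{L}(\mathsf{H}^\ast)$ has vertex set $\mathsf{H}^\ast$, with distinct $\mathrm{C},\mathrm{C}'$ joined iff $\mathrm{C}\cap\mathrm{C}'\neq\emptyset$; cycles are meant in the usual graph-theoretic sense. Fix $b\ge1$. A clique-gossip matrix for a clique $\mathrm{C}$ is a block matrix $\mathbf{M}_{\mathrm{C}}\in\mathbb{R}^{nb\times nb}$ with $b\times b$ blocks, whose $(i,j)$ block equals an arbitrary matrix $\mathbf{A}_{ij}(\mathrm{C})\in\mathbb{R}^{b\times b}$ when $i,j\in\mathrm{C}$, equals $\mathbf{I}_b$ when $i=j\notin\mathrm{C}$, and equals $\mathbf{0}_b$ otherwise. *)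

theory Defs
  imports "Jordan_Normal_Form.Char_Poly" "HOL-Combinatorics.Permutations"
begin

definition simple_graph :: "nat \<Rightarrow> (nat \<Rightarrow> nat \<Rightarrow> bool) \<Rightarrow> bool" where
  "simple_graph n E \<longleftrightarrow>
     (\<forall>i j. E i j \<longrightarrow> i \<in> {1..n} \<and> j \<in> {1..n}) \<and>
     (\<forall>i j. E i j \<longrightarrow> E j i) \<and> (\<forall>i. \<not> E i i)"

definition is_clique :: "nat \<Rightarrow> (nat \<Rightarrow> nat \<Rightarrow> bool) \<Rightarrow> nat set \<Rightarrow> bool" where
  "is_clique n E C \<longleftrightarrow> C \<subseteq> {1..n} \<and> (\<forall>i\<in>C. \<forall>j\<in>C. i \<noteq> j \<longrightarrow> E i j)"

definition union_adj :: "nat set set \<Rightarrow> nat \<Rightarrow> nat \<Rightarrow> bool" where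
  "union_adj H i j \<longleftrightarrow> i \<noteq> j \<and> (\<exists>C\<in>H. i \<in> C \<and> j \<in> C)"

definition clique_coverage :: "nat \<Rightarrow> (nat \<Rightarrow> nat \<Rightarrow> bool) \<Rightarrow> nat set set \<Rightarrow> bool" where
  "clique_coverage n E H \<longleftrightarrow>
     finite H \<and> (\<forall>C\<in>H. is_clique n E C) \<and> \<Union>H = {1..n} \<and>
     (\<forall>i\<in>{1..n}. \<forall>j\<in>{1..n}. (union_adj H)\<^sup>*\<^sup>* i j)"

definition line_adj :: "nat set set \<Rightarrow> nat set \<Rightarrow> nat set \<Rightarrow> bool" where
  "line_adj H C C' \<longleftrightarrow> C \<in> H \<and> C' \<in> H \<and> C \<noteq> C' \<and> C \<inter> C' \<noteq> {}"

definition line_graph_has_cycle :: "nat set set \<Rightarrow> bool" where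
  "line_graph_has_cycle H \<longleftrightarrow>
     (\<exists>cs. length cs \<ge> 3 \<and> distinct cs \<and> set cs \<subseteq> H \<and>
        (\<forall>k < length cs. line_adj H (cs ! k) (cs ! ((k + 1) mod length cs))))"

(* Block indexing: row r of an (nb x nb) matrix lies in block row r div b + 1
   (vertex in {1..n}) at position r mod b inside the block. *)
definition clique_gossip :: "nat \<Rightarrow> nat \<Rightarrow> nat set \<Rightarrow> real mat \<Rightarrow> bool" where
  "clique_gossip n b C M \<longleftrightarrow>
     M \<in> carrier_mat (n * b) (n * b) \<and>
     (\<forall>r < n * b. \<forall>c < n * b.
        let i = r div b + 1; j = c div b + 1 in
        \<not> (i \<in> C \<and> j \<in> C) \<longrightarrow>
          M $$ (r, c) = (if i = j \<and> r mod b = c mod b then 1 else 0))"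

fun ordered_prod :: "nat \<Rightarrow> (nat set \<Rightarrow> real mat) \<Rightarrow> (nat \<Rightarrow> nat set) \<Rightarrow> nat \<Rightarrow> real mat" where
  "ordered_prod N M f 0 = 1\<^sub>m N"
| "ordered_prod N M f (Suc k) = M (f (Suc k)) * ordered_prod N M f k"

end

theory Submission
  imports Defs
begin

text \<open>The gossip matrix of a clique C differs from the identity only in the rows and columns of
  the blocks of C, so the matrices of two disjoint cliques commute; the factors of the product
  can fail to commute only along edges of the line graph, which is a forest. A forest always has
  a leaf l with at most one neighbour p. In any ordering, a cyclic rotation (which preserves the
  characteristic polynomial, as char_poly (A * B) = char_poly (B * A)) followed by commuting
  M l past the other factors turns the product into one over the remaining cliques with M p
  replaced by M l * M p. The new family still commutes along non-edges, so induction on the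
  number of cliques shows that every ordering has the same characteristic polynomial.\<close>

section \<open>Characteristic polynomials of matrix products\<close>

interpretation const_poly: comm_ring_hom "\<lambda>x::'a::comm_ring_1. [:x:]"
  by unfold_locales (auto simp: one_pCons)

lemma char_poly_matrix_eq:
  assumes "A \<in> carrier_mat n n"
  shows "char_poly_matrix A = [:0,1:] \<cdot>\<^sub>m 1\<^sub>m n - map_mat (\<lambda>x. [:x:]) A"
  using assms unfolding char_poly_matrix_def by (intro eq_matI) auto

text \<open>With X = t I, block elimination gives det (X - A B) det X = det (L R) = det (R L) =
  det X det (X - B A) for the block matrices L = [[I, -A], [0, X]] and R = [[X, A], [B, I]];
  det X = t^n can be cancelled in the polynomial ring.\<close>

lemma char_poly_mult_commute:
  fixes A B :: "'a::idom mat"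
  assumes A: "A \<in> carrier_mat n n" and B: "B \<in> carrier_mat n n"
  shows "char_poly (A * B) = char_poly (B * A)"
proof -
  define X where "X = ([:0,1:] :: 'a poly) \<cdot>\<^sub>m 1\<^sub>m n"
  define A' where "A' = map_mat (\<lambda>x. [:x:]) A"
  define B' where "B' = map_mat (\<lambda>x. [:x:]) B"
  have X: "X \<in> carrier_mat n n" and A': "A' \<in> carrier_mat n n" and B': "B' \<in> carrier_mat n n"
    using A B by (auto simp: X_def A'_def B'_def)
  have XA: "X * A' = A' * X" and XB: "X * B' = B' * X" using A' B' unfolding X_def
    by (auto simp: mult_smult_distrib[of _ n n] mult_smult_assoc_mat[of _ n n])
  define L where "L = four_block_mat (1\<^sub>m n) (-A') (0\<^sub>m n n) X"
  define R where "R = four_block_mat X A' B' (1\<^sub>m n)"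
  have L: "L \<in> carrier_mat (n+n) (n+n)" and R: "R \<in> carrier_mat (n+n) (n+n)"
    using X A' B' by (auto simp: L_def R_def)
  have LR: "L * R = four_block_mat (X - A' * B') (0\<^sub>m n n) (X * B') X"
    unfolding L_def R_def
    by (subst mult_four_block_mat[OF one_carrier_mat uminus_carrier_mat[OF A'] zero_carrier_mat X X A' B' one_carrier_mat])
      (use X A' B' in \<open>auto simp: minus_add_uminus_mat\<close>)
  have RL: "R * L = four_block_mat X (0\<^sub>m n n) B' (X - B' * A')"
    unfolding L_def R_def
    by (subst mult_four_block_mat[OF X A' B' one_carrier_mat one_carrier_mat uminus_carrier_mat[OF A'] zero_carrier_mat X])
      (use X A' B' XA XB in \<open>auto simp: minus_add_uminus_mat\<close>)
  have "det (X - A' * B') * det X = det (L * R)"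
    unfolding LR using X A' B' by (subst det_four_block_mat_upper_right_zero[of _ n _ n]) auto
  also have "\<dots> = det (R * L)" using det_mult[OF L R] det_mult[OF R L] by (simp add: mult.commute)
  also have "\<dots> = det X * det (X - B' * A')"
    unfolding RL using X A' B' by (subst det_four_block_mat_upper_right_zero[of _ n _ n]) auto
  finally have "det (X - A' * B') * det X = det (X - B' * A') * det X"
    by (simp add: mult.commute)
  moreover have "det X \<noteq> 0" unfolding X_def by (simp add: det_smult)
  ultimately have "det (X - A' * B') = det (X - B' * A')" by simp
  then show ?thesis
    using A B unfolding char_poly_def X_def A'_def B'_def
    by (simp add: char_poly_matrix_eq[of _ n] const_poly.mat_hom_mult)
qed

section \<open>Reordering products along a forest\<close>

definition mat_list_prod :: "nat \<Rightarrow> ('i \<Rightarrow> 'a::semiring_1 mat) \<Rightarrow> 'i list \<Rightarrow> 'a mat" where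
  "mat_list_prod N M xs = foldr (\<lambda>i A. M i * A) xs (1\<^sub>m N)"

lemma mat_list_prod_Nil [simp]: "mat_list_prod N M [] = 1\<^sub>m N"
  and mat_list_prod_Cons [simp]: "mat_list_prod N M (i # xs) = M i * mat_list_prod N M xs"
  by (simp_all add: mat_list_prod_def)

lemma mat_list_prod_carrier:
  "\<forall>i\<in>set xs. M i \<in> carrier_mat N N \<Longrightarrow> mat_list_prod N M xs \<in> carrier_mat N N"
  by (induction xs) (auto intro!: mult_carrier_mat)

lemma mat_list_prod_append:
  assumes "\<forall>i\<in>set (xs @ ys). M i \<in> carrier_mat N N"
  shows "mat_list_prod N M (xs @ ys) = mat_list_prod N M xs * mat_list_prod N M ys"
  using assms
proof (induction xs)
  case Nil
  then show ?case by (simp add: left_mult_one_mat[OF mat_list_prod_carrier])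
next
  case (Cons i xs)
  then show ?case
    using mat_list_prod_carrier[of xs M N] mat_list_prod_carrier[of ys M N]
    by (simp add: assoc_mult_mat[of _ N N _ N _ N] ball_Un)
qed

lemma mat_list_prod_cong:
  "(\<And>i. i \<in> set xs \<Longrightarrow> M i = M' i) \<Longrightarrow> mat_list_prod N M xs = mat_list_prod N M' xs"
  by (induction xs) auto

lemma commute_mat_mult:
  assumes "A \<in> carrier_mat N N" "B \<in> carrier_mat N N" "C \<in> carrier_mat N N"
    and "A * C = C * A" "B * C = C * B"
  shows "(A * B) * C = C * (A * B)"
proof -
  have "(A * B) * C = A * (B * C)" using assms(1-3) by (rule assoc_mult_mat)
  also have "\<dots> = (A * C) * B" unfolding assms(5) using assms(1,3,2) by (rule assoc_mult_mat[symmetric])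
  also have "\<dots> = C * (A * B)" unfolding assms(4) using assms(3,1,2) by (rule assoc_mult_mat)
  finally show ?thesis .
qed

lemma commute_mat_list_prod:
  assumes "A \<in> carrier_mat N N"
    and "\<forall>i\<in>set xs. M i \<in> carrier_mat N N \<and> A * M i = M i * A"
  shows "A * mat_list_prod N M xs = mat_list_prod N M xs * A"
  using assms(2)
proof (induction xs)
  case Nil
  then show ?case using assms(1) by simp
next
  case (Cons i xs)
  then have "M i * mat_list_prod N M xs * A = A * (M i * mat_list_prod N M xs)"
    using assms(1) mat_list_prod_carrier[of xs M N] by (intro commute_mat_mult[of _ N]) auto
  then show ?case by simp
qed

lemma mat_list_prod_move_past_commuting:
  assumes car: "\<forall>i\<in>set (xs @ l # ys @ zs). M i \<in> carrier_mat N N"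
    and comm: "\<forall>j\<in>set ys. M l * M j = M j * M l"
  shows "mat_list_prod N M (xs @ l # ys @ zs) = mat_list_prod N M (xs @ ys @ l # zs)"
proof -
  let ?P = "mat_list_prod N M"
  have l: "M l \<in> carrier_mat N N" and ys: "?P ys \<in> carrier_mat N N" and zs: "?P zs \<in> carrier_mat N N"
    using car by (auto intro!: mat_list_prod_carrier)
  have "?P (l # ys @ zs) = (M l * ?P ys) * ?P zs"
    using car l ys zs
    by (simp add: mat_list_prod_append[where xs = ys and ys = zs] assoc_mult_mat[of _ N N _ N _ N])
  also have "M l * ?P ys = ?P ys * M l"
  proof (rule commute_mat_list_prod[OF l])
    have "\<forall>j\<in>set ys. M j \<in> carrier_mat N N" using car by simp
    with comm show "\<forall>j\<in>set ys. M j \<in> carrier_mat N N \<and> M l * M j = M j * M l" by blast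
  qed
  also have "(?P ys * M l) * ?P zs = ?P (ys @ l # zs)"
    using car l ys zs
    by (simp add: mat_list_prod_append[where xs = ys and ys = "l # zs"] assoc_mult_mat[of _ N N _ N _ N])
  finally show ?thesis
    using car by (simp add: mat_list_prod_append[where xs = xs])
qed

lemma char_poly_mat_list_prod_rotate:
  fixes M :: "'i \<Rightarrow> 'a::idom mat"
  assumes "\<forall>i\<in>set (xs @ ys). M i \<in> carrier_mat N N"
  shows "char_poly (mat_list_prod N M (xs @ ys)) = char_poly (mat_list_prod N M (ys @ xs))"
proof -
  have "mat_list_prod N M xs \<in> carrier_mat N N" "mat_list_prod N M ys \<in> carrier_mat N N"
    using assms by (auto intro!: mat_list_prod_carrier)
  then show ?thesis
    using assms
    by (simp add: mat_list_prod_append[where xs = xs and ys = ys]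
        mat_list_prod_append[where xs = ys and ys = xs] char_poly_mult_commute[of _ N] ball_Un)
qed

lemma mat_list_prod_fuse_last_two:
  assumes car: "\<forall>i\<in>set (xs @ [l, p]). M i \<in> carrier_mat N N" and "l \<notin> set xs" "p \<notin> set xs"
  shows "mat_list_prod N M (xs @ [l, p]) = mat_list_prod N (M(p := M l * M p)) (xs @ [p])"
proof -
  let ?M' = "M(p := M l * M p)"
  have lp: "M l \<in> carrier_mat N N" "M p \<in> carrier_mat N N" using car by simp_all
  have car': "\<forall>i\<in>set (xs @ [p]). ?M' i \<in> carrier_mat N N"
    using car lp by (auto intro!: mult_carrier_mat)
  have "mat_list_prod N M (xs @ [l, p]) = mat_list_prod N M xs * (M l * (M p * 1\<^sub>m N))"
    using car by (subst mat_list_prod_append) simp_all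
  also have "mat_list_prod N M xs = mat_list_prod N ?M' xs"
    using assms(3) by (intro mat_list_prod_cong) auto
  also have "M l * (M p * 1\<^sub>m N) = ?M' p * 1\<^sub>m N"
    using lp by (simp add: right_mult_one_mat[of _ N N] mult_carrier_mat[of _ N N _ N])
  also have "mat_list_prod N ?M' xs * (?M' p * 1\<^sub>m N) = mat_list_prod N ?M' (xs @ [p])"
    using car' by (subst mat_list_prod_append) simp_all
  finally show ?thesis .
qed

text \<open>Rotate the product so that M p comes last, then move M l right until it meets M p.\<close>

lemma char_poly_mat_list_prod_absorb:
  fixes M :: "'i \<Rightarrow> 'a::idom mat"
  assumes car: "\<forall>i\<in>I. M i \<in> carrier_mat N N"
    and ws: "distinct ws" "set ws = I"
    and lp: "l \<in> I" "p \<in> I" "l \<noteq> p"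
    and comm: "\<forall>q\<in>I - {l, p}. M l * M q = M q * M l"
  shows "\<exists>ws'. distinct ws' \<and> set ws' = I - {l} \<and>
    char_poly (mat_list_prod N M ws) = char_poly (mat_list_prod N (M(p := M l * M p)) ws')"
proof -
  obtain xs zs where ws_p: "ws = xs @ p # zs" using ws(2) lp(2) by (meson split_list)
  then have "l \<in> set (zs @ xs)" using ws(2) lp(1,3) by auto
  then obtain us vs where uv: "zs @ xs = us @ l # vs" by (meson split_list)
  have rotated: "zs @ xs @ [p] = us @ l # vs @ [p]" using uv by simp
  have "distinct (zs @ xs @ [p])" "set (zs @ xs @ [p]) = I"
    using ws unfolding ws_p by auto
  then have dist: "distinct (us @ l # vs @ [p])" and set: "set (us @ l # vs @ [p]) = I"
    unfolding rotated by simp_all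
  have "char_poly (mat_list_prod N M ws) = char_poly (mat_list_prod N M ((xs @ [p]) @ zs))"
    by (simp add: ws_p)
  also have "\<dots> = char_poly (mat_list_prod N M (zs @ xs @ [p]))"
    by (rule char_poly_mat_list_prod_rotate) (use car ws in \<open>auto simp: ws_p\<close>)
  also have "mat_list_prod N M (zs @ xs @ [p]) = mat_list_prod N M (us @ vs @ [l, p])"
    unfolding rotated
  proof (rule mat_list_prod_move_past_commuting)
    show "\<forall>i\<in>set (us @ l # vs @ [p]). M i \<in> carrier_mat N N" using car set by blast
    show "\<forall>j\<in>set vs. M l * M j = M j * M l"
    proof
      fix j assume "j \<in> set vs"
      then have "j \<in> I - {l, p}" using dist set by auto
      with comm show "M l * M j = M j * M l" by (rule bspec)
    qed
  qed
  also have "\<dots> = mat_list_prod N (M(p := M l * M p)) (us @ vs @ [p])"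
    using mat_list_prod_fuse_last_two[of "us @ vs" l p M N] car set dist by auto
  finally show ?thesis
    using dist set by (intro exI[of _ "us @ vs @ [p]"]) auto
qed

definition nonadjacent_commute :: "('i \<Rightarrow> 'i \<Rightarrow> bool) \<Rightarrow> ('i \<Rightarrow> 'a::semiring_1 mat) \<Rightarrow> 'i set \<Rightarrow> bool" where
  "nonadjacent_commute adj M I \<longleftrightarrow>
     (\<forall>i\<in>I. \<forall>j\<in>I. i \<noteq> j \<longrightarrow> \<not> adj i j \<longrightarrow> M i * M j = M j * M i)"

lemma nonadjacent_commute_absorb:
  assumes comm: "nonadjacent_commute adj M I" and car: "\<forall>i\<in>I. M i \<in> carrier_mat N N"
    and lp: "l \<in> I" "p \<in> I" "l \<noteq> p" and leaf: "\<forall>q\<in>I - {l, p}. \<not> adj l q"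
  shows "nonadjacent_commute adj (M(p := M l * M p)) (I - {l})"
  unfolding nonadjacent_commute_def
proof (intro ballI impI)
  fix i j assume ij: "i \<in> I - {l}" "j \<in> I - {l}" "i \<noteq> j" "\<not> adj i j"
  have absorbed: "(M l * M p) * M q = M q * (M l * M p)"
    if q: "q \<in> I - {l, p}" "\<not> adj p q \<or> \<not> adj q p" for q
  proof (rule commute_mat_mult[of _ N])
    have "q \<in> I" "q \<noteq> l" "q \<noteq> p" "\<not> adj l q" using q leaf by auto
    note commute = comm[unfolded nonadjacent_commute_def, rule_format]
    show "M l * M q = M q * M l"
      using \<open>q \<noteq> l\<close> by (rule commute[OF lp(1) \<open>q \<in> I\<close> not_sym \<open>\<not> adj l q\<close>])
    show "M p * M q = M q * M p"
    proof (cases "adj p q")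
      case True
      with q(2) have "\<not> adj q p" by blast
      from commute[OF \<open>q \<in> I\<close> lp(2) \<open>q \<noteq> p\<close> this] show ?thesis by (rule sym)
    next
      case False
      with \<open>q \<noteq> p\<close> show ?thesis by (rule commute[OF lp(2) \<open>q \<in> I\<close> not_sym])
    qed
  qed (use q lp car in auto)
  consider "i = p" | "j = p" | "i \<noteq> p" "j \<noteq> p" by blast
  then show "(M(p := M l * M p)) i * (M(p := M l * M p)) j = (M(p := M l * M p)) j * (M(p := M l * M p)) i"
  proof cases
    case 1
    have "(M l * M p) * M j = M j * (M l * M p)"
      by (rule absorbed) (use ij 1 in auto)
    then show ?thesis using ij 1 by simp
  next
    case 2
    have "(M l * M p) * M i = M i * (M l * M p)"
      by (rule absorbed) (use ij 2 in auto)
    then show ?thesis using ij 2 by simp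
  next
    case 3
    have "M i * M j = M j * M i"
      using ij by (intro comm[unfolded nonadjacent_commute_def, rule_format]) auto
    then show ?thesis using 3 by simp
  qed
qed

text \<open>Every nonempty vertex set contains a vertex with at most one neighbour inside it; for an
  irreflexive symmetric relation this characterises forests.\<close>

definition one_degenerate :: "('i \<Rightarrow> 'i \<Rightarrow> bool) \<Rightarrow> 'i set \<Rightarrow> bool" where
  "one_degenerate adj I \<longleftrightarrow> (\<forall>J\<subseteq>I. J \<noteq> {} \<longrightarrow> (\<exists>l\<in>J. \<exists>p. \<forall>q\<in>J. adj l q \<longrightarrow> q = p))"

lemma one_degenerate_subset: "one_degenerate adj I \<Longrightarrow> J \<subseteq> I \<Longrightarrow> one_degenerate adj J"
  unfolding one_degenerate_def by (meson order.trans)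

lemma one_degenerate_obtain_leaf:
  assumes "one_degenerate adj I" and two: "i \<in> I" "j \<in> I" "i \<noteq> j"
  obtains l p where "l \<in> I" "p \<in> I" "l \<noteq> p" "\<forall>q\<in>I - {l, p}. \<not> adj l q"
proof -
  obtain l p' where l: "l \<in> I" and nbr: "\<forall>q\<in>I. adj l q \<longrightarrow> q = p'"
    using assms(1)[unfolded one_degenerate_def, rule_format, of I] two(1) by auto
  have "\<exists>p\<in>I - {l}. \<forall>q\<in>I - {l, p}. \<not> adj l q"
  proof (cases "p' \<in> I - {l}")
    case True
    then show ?thesis using nbr by blast
  next
    case False
    obtain p where "p \<in> I - {l}" using two by blast
    then show ?thesis using nbr False by blast
  qed
  then show thesis using that l by blast
qed

theorem char_poly_mat_list_prod_reorder:
  fixes M :: "'i \<Rightarrow> 'a::idom mat"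
  assumes "one_degenerate adj I" "nonadjacent_commute adj M I" "\<forall>i\<in>I. M i \<in> carrier_mat N N"
    and "distinct ws" "set ws = I" "distinct ws'" "set ws' = I"
  shows "char_poly (mat_list_prod N M ws) = char_poly (mat_list_prod N M ws')"
  using assms
proof (induction "card I" arbitrary: I M ws ws' rule: less_induct)
  case less
  have len: "length ws = card I" "length ws' = card I"
    using less.prems(4-7) by (metis distinct_card)+
  show ?case
  proof (cases "card I < 2")
    case True
    then have "length ws < 2" "length ws' < 2" using len by simp_all
    then have "ws = ws'" using less.prems(5,7) by (cases ws; cases ws') auto
    then show ?thesis by simp
  next
    case False
    then have "Suc (Suc 0) \<le> length ws" using len by simp
    then obtain i j us where "ws = i # j # us" by (auto simp: Suc_le_length_iff)
    then have "i \<in> I" "j \<in> I" "i \<noteq> j" using less.prems(4,5) by auto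
    then obtain l p where lp: "l \<in> I" "p \<in> I" "l \<noteq> p" and leaf: "\<forall>q\<in>I - {l, p}. \<not> adj l q"
      by (rule one_degenerate_obtain_leaf[OF less.prems(1)])
    have comm: "\<forall>q\<in>I - {l, p}. M l * M q = M q * M l"
    proof
      fix q assume "q \<in> I - {l, p}"
      with leaf show "M l * M q = M q * M l"
        by (intro less.prems(2)[unfolded nonadjacent_commute_def, rule_format, OF lp(1)]) auto
    qed
    let ?M' = "M(p := M l * M p)"
    obtain vs where vs: "distinct vs" "set vs = I - {l}"
      "char_poly (mat_list_prod N M ws) = char_poly (mat_list_prod N ?M' vs)"
      using char_poly_mat_list_prod_absorb[OF less.prems(3-5) lp comm] by blast
    obtain vs' where vs': "distinct vs'" "set vs' = I - {l}"
      "char_poly (mat_list_prod N M ws') = char_poly (mat_list_prod N ?M' vs')"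
      using char_poly_mat_list_prod_absorb[OF less.prems(3,6,7) lp comm] by blast
    have "char_poly (mat_list_prod N ?M' vs) = char_poly (mat_list_prod N ?M' vs')"
    proof (rule less.hyps)
      show "card (I - {l}) < card I"
        using lp less.prems(5) by (metis card_Diff1_less finite_set)
      show "one_degenerate adj (I - {l})"
        using less.prems(1) by (rule one_degenerate_subset) blast
      show "nonadjacent_commute adj ?M' (I - {l})"
        using less.prems(2,3) lp leaf by (rule nonadjacent_commute_absorb)
      show "\<forall>i\<in>I - {l}. ?M' i \<in> carrier_mat N N"
        using less.prems(3) lp by (auto intro!: mult_carrier_mat)
    qed (use vs vs' in auto)
    then show ?thesis using vs(3) vs'(3) by simp
  qed
qed

section \<open>Acyclic line graphs are forests\<close>

text \<open>A longest path cannot be extended at its last vertex v, so a neighbour of v other than its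
  predecessor lies earlier on the path and closes a cycle. For a path with one vertex the
  "predecessor" index k - 2 truncates to 0, i.e. to v itself, which is harmless.\<close>

lemma cycle_of_min_degree_two:
  assumes "finite J" "J \<noteq> {}" and irrefl: "\<And>v. \<not> adj v v"
    and deg: "\<And>v u. v \<in> J \<Longrightarrow> \<exists>w\<in>J. adj v w \<and> w \<noteq> u"
  shows "\<exists>cs. 3 \<le> length cs \<and> distinct cs \<and> set cs \<subseteq> J \<and>
    (\<forall>k < length cs. adj (cs ! k) (cs ! ((k + 1) mod length cs)))"
proof -
  define path where "path cs \<longleftrightarrow> cs \<noteq> [] \<and> distinct cs \<and> set cs \<subseteq> J \<and>
    (\<forall>k. Suc k < length cs \<longrightarrow> adj (cs ! k) (cs ! Suc k))" for cs
  obtain v0 where "v0 \<in> J" using assms(2) by blast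
  then have "path [v0]" by (simp add: path_def)
  moreover have "length cs < Suc (card J)" if "path cs" for cs
    using that assms(1) card_mono[of J "set cs"] distinct_card[of cs] by (simp add: path_def)
  ultimately obtain cs where cs: "path cs" and longest: "\<And>ds. path ds \<Longrightarrow> length ds \<le> length cs"
    using ex_has_greatest_nat[of path "[v0]" length "Suc (card J)"] by blast
  define k where "k = length cs"
  define v where "v = cs ! (k - 1)"
  have k: "k \<ge> 1" using cs by (simp add: path_def k_def Suc_le_eq)
  have v: "v \<in> J" using cs k by (auto simp: path_def k_def v_def)
  have closed: "w \<in> set cs" if "w \<in> J" "adj v w" for w
  proof (rule ccontr)
    assume "w \<notin> set cs"
    with cs that k have "path (cs @ [w])"
      by (auto simp: path_def nth_append k_def v_def less_Suc_eq) (metis One_nat_def diff_Suc_1)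
    with longest[of "cs @ [w]"] show False by simp
  qed
  obtain w where w: "w \<in> J" "adj v w" "w \<noteq> cs ! (k - 2)" using deg[OF v] by blast
  then obtain j where j: "j < k" "cs ! j = w" using closed by (metis in_set_conv_nth k_def)
  have "j \<noteq> k - 1" using j w irrefl v_def by metis
  moreover have "j \<noteq> k - 2" using j w by metis
  ultimately have jk: "j + 3 \<le> k" using j(1) by linarith
  show ?thesis
  proof (intro exI conjI allI impI)
    let ?ds = "drop j cs"
    show "3 \<le> length ?ds" "distinct ?ds" "set ?ds \<subseteq> J"
      using jk cs set_drop_subset[of j cs] by (auto simp: path_def k_def)
    fix m assume m: "m < length ?ds"
    show "adj (?ds ! m) (?ds ! ((m + 1) mod length ?ds))"
    proof (cases "Suc m < length ?ds")
      case True
      then show ?thesis using cs by (simp add: path_def)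
    next
      case False
      then have last: "m + 1 = length ?ds" using m by simp
      then have "j + m = k - 1" using jk by (simp add: k_def)
      then have "?ds ! m = v" "?ds ! 0 = w"
        using m j jk by (simp_all add: v_def k_def)
      with last show ?thesis using w(2) by simp
    qed
  qed
qed

lemma one_degenerate_line_adj:
  assumes "finite H" "\<not> line_graph_has_cycle H"
  shows "one_degenerate (line_adj H) H"
  unfolding one_degenerate_def
proof (intro allI impI, rule ccontr)
  fix J assume J: "J \<subseteq> H" "J \<noteq> {}" and "\<not> (\<exists>l\<in>J. \<exists>p. \<forall>q\<in>J. line_adj H l q \<longrightarrow> q = p)"
  then have "\<And>v u. v \<in> J \<Longrightarrow> \<exists>w\<in>J. line_adj H v w \<and> w \<noteq> u" by blast
  moreover have "finite J" using J assms(1) finite_subset by blast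
  moreover have "\<And>v. \<not> line_adj H v v" by (simp add: line_adj_def)
  ultimately obtain cs where "3 \<le> length cs" "distinct cs" "set cs \<subseteq> J"
    "\<forall>k < length cs. line_adj H (cs ! k) (cs ! ((k + 1) mod length cs))"
    using cycle_of_min_degree_two[of J "line_adj H"] J by blast
  then have "line_graph_has_cycle H"
    unfolding line_graph_has_cycle_def using J by blast
  with assms(2) show False by contradiction
qed

section \<open>Gossip matrices of disjoint cliques commute\<close>

definition identity_outside :: "'a::zero_neq_one mat \<Rightarrow> nat set \<Rightarrow> bool" where
  "identity_outside A S \<longleftrightarrow>
     (\<forall>r < dim_row A. \<forall>c < dim_col A. (r \<in> S \<and> c \<in> S) \<or> A $$ (r, c) = of_bool (r = c))"

lemma identity_outsideD:
  "identity_outside A S \<Longrightarrow> r < dim_row A \<Longrightarrow> c < dim_col A \<Longrightarrow> r \<notin> S \<or> c \<notin> S \<Longrightarrow>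
    A $$ (r, c) = of_bool (r = c)"
  unfolding identity_outside_def by blast

text \<open>Entrywise, A r k * B k c = [r = k] B k c + A r k [k = c] - [r = k][k = c], since one of the
  two perturbations A r k - [r = k] and B k c - [k = c] vanishes for every k.\<close>

lemma mult_identity_outside_disjoint:
  fixes A B :: "'a::comm_ring_1 mat"
  assumes A: "A \<in> carrier_mat N N" and B: "B \<in> carrier_mat N N"
    and "identity_outside A S" "identity_outside B T" "S \<inter> T = {}"
  shows "A * B = A + B - 1\<^sub>m N"
proof (rule eq_matI)
  fix r c assume "r < dim_row (A + B - 1\<^sub>m N)" "c < dim_col (A + B - 1\<^sub>m N)"
  then have rc: "r < N" "c < N" by simp_all
  have entry: "A $$ (r, k) * B $$ (k, c) =
      of_bool (r = k) * B $$ (k, c) + A $$ (r, k) * of_bool (k = c) - of_bool (r = k) * of_bool (k = c)"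
    if "k < N" for k
  proof -
    have "A $$ (r, k) = of_bool (r = k) \<or> B $$ (k, c) = of_bool (k = c)"
    proof (cases "k \<in> S")
      case True
      then have "k \<notin> T" using assms(5) by blast
      then have "B $$ (k, c) = of_bool (k = c)"
        using B rc that by (intro identity_outsideD[OF assms(4)]) auto
      then show ?thesis ..
    next
      case False
      then have "A $$ (r, k) = of_bool (r = k)"
        using A rc that by (intro identity_outsideD[OF assms(3)]) auto
      then show ?thesis ..
    qed
    then have "(A $$ (r, k) - of_bool (r = k)) * (B $$ (k, c) - of_bool (k = c)) = 0" by auto
    then show ?thesis by (simp add: algebra_simps)
  qed
  have "(A * B) $$ (r, c) = (\<Sum>k<N. A $$ (r, k) * B $$ (k, c))"
    using A B rc by (simp add: scalar_prod_def atLeast0LessThan)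
  also have "\<dots> = (\<Sum>k<N. of_bool (r = k) * B $$ (k, c) + A $$ (r, k) * of_bool (k = c)
      - of_bool (r = k) * of_bool (k = c))"
    using entry by (intro sum.cong) auto
  also have "\<dots> = B $$ (r, c) + A $$ (r, c) - of_bool (r = c)"
  proof -
    have "{..<N} \<inter> {k. r = k} = {r}" "{..<N} \<inter> {k. k = c} = {c}"
      "{..<N} \<inter> {k. r = k \<and> k = c} = (if r = c then {c} else {})"
      using rc by auto
    then show ?thesis by (simp add: sum.distrib sum_subtractf)
  qed
  also have "\<dots> = (A + B - 1\<^sub>m N) $$ (r, c)"
    using A B rc by simp
  finally show "(A * B) $$ (r, c) = (A + B - 1\<^sub>m N) $$ (r, c)" .
qed (use A B in auto)

lemma commute_of_identity_outside_disjoint: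
  fixes A B :: "'a::comm_ring_1 mat"
  assumes "A \<in> carrier_mat N N" "B \<in> carrier_mat N N"
    and "identity_outside A S" "identity_outside B T" "S \<inter> T = {}"
  shows "A * B = B * A"
proof -
  have "T \<inter> S = {}" using assms(5) by blast
  then show ?thesis
    using assms mult_identity_outside_disjoint[of A N B S T] mult_identity_outside_disjoint[of B N A T S]
    by (simp add: comm_add_mat[of A N N B])
qed

lemma clique_gossip_identity_outside:
  assumes "clique_gossip n b C M"
  shows "identity_outside M {r. r div b + 1 \<in> C}"
  unfolding identity_outside_def
proof (intro allI impI)
  fix r c assume "r < dim_row M" "c < dim_col M"
  then have rc: "r < n * b" "c < n * b" using assms by (auto simp: clique_gossip_def)
  have same_position: "(r div b = c div b \<and> r mod b = c mod b) \<longleftrightarrow> r = c"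
    by (metis div_mult_mod_eq)
  note gossip = assms[unfolded clique_gossip_def Let_def, THEN conjunct2, rule_format, OF rc]
  show "r \<in> {r. r div b + 1 \<in> C} \<and> c \<in> {r. r div b + 1 \<in> C} \<or> M $$ (r, c) = of_bool (r = c)"
  proof (cases "r \<in> {r. r div b + 1 \<in> C} \<and> c \<in> {r. r div b + 1 \<in> C}")
    case False
    then have "M $$ (r, c) = (if r div b + 1 = c div b + 1 \<and> r mod b = c mod b then 1 else 0)"
      by (intro gossip) simp
    with same_position show ?thesis by simp
  qed simp
qed

lemma clique_gossip_commute:
  assumes "clique_gossip n b C M" "clique_gossip n b C' M'" "C \<inter> C' = {}"
  shows "M * M' = M' * M"
proof (rule commute_of_identity_outside_disjoint)
  show "M \<in> carrier_mat (n * b) (n * b)" "M' \<in> carrier_mat (n * b) (n * b)"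
    using assms(1,2) by (simp_all add: clique_gossip_def)
  show "{r. r div b + 1 \<in> C} \<inter> {r. r div b + 1 \<in> C'} = {}" using assms(3) by blast
qed (use assms(1,2) clique_gossip_identity_outside in blast)+

lemma ordered_prod_eq_mat_list_prod:
  "ordered_prod N M f d = mat_list_prod N M (map f (rev [1..<Suc d]))"
  by (induction d) auto

lemma bij_betw_enumeration:
  assumes "bij_betw f {1..d} H"
  shows "distinct (map f (rev [1..<Suc d]))" "set (map f (rev [1..<Suc d])) = H"
proof -
  have "set (rev [1..<Suc d]) = {1..d}" by auto
  then show "distinct (map f (rev [1..<Suc d]))" "set (map f (rev [1..<Suc d])) = H"
    using assms unfolding bij_betw_def distinct_map by simp_all
qed

theorem corollary1:
  fixes n b d :: nat and E :: "nat \<Rightarrow> nat \<Rightarrow> bool" and H :: "nat set set"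
    and Q :: "nat \<Rightarrow> nat set" and M :: "nat set \<Rightarrow> real mat" and \<pi> :: "nat \<Rightarrow> nat"
  assumes "b \<ge> 1"
    and "simple_graph n E"
    and "clique_coverage n E H"
    and "card H = d"
    and "bij_betw Q {1..d} H"
    and "\<forall>C\<in>H. clique_gossip n b C (M C)"
    and "\<not> line_graph_has_cycle H"
    and "\<pi> permutes {1..d}"
  shows "char_poly (ordered_prod (n * b) M Q d) = char_poly (ordered_prod (n * b) M (Q \<circ> \<pi>) d)"
proof -
  have "finite H" using assms(3) by (simp add: clique_coverage_def)
  then have forest: "one_degenerate (line_adj H) H"
    using assms(7) by (rule one_degenerate_line_adj)
  have comm: "nonadjacent_commute (line_adj H) M H"
    unfolding nonadjacent_commute_def
  proof (intro ballI impI)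
    fix C C' assume "C \<in> H" "C' \<in> H" "C \<noteq> C'" "\<not> line_adj H C C'"
    then show "M C * M C' = M C' * M C"
      using assms(6) by (intro clique_gossip_commute) (auto simp: line_adj_def)
  qed
  have car: "\<forall>C\<in>H. M C \<in> carrier_mat (n * b) (n * b)"
    using assms(6) by (simp add: clique_gossip_def)
  have "bij_betw (Q \<circ> \<pi>) {1..d} H"
    using permutes_imp_bij[OF assms(8)] assms(5) by (rule bij_betw_trans)
  then show ?thesis
    unfolding ordered_prod_eq_mat_list_prod
    using char_poly_mat_list_prod_reorder[OF forest comm car]
      bij_betw_enumeration[OF assms(5)] bij_betw_enumeration
    by blast
qed

end
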